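(* Let $p$ be a prime and $t\in\mathbb Z/(p)$ nonzero, and let $j_0,\dots,j_{p-1}\in\mathbb Z/(p)$ (indices read in $\mathbb Z/(p)$) satisfy $j_i=j_{-i}$ and $j_{t^s i}=t^s j_i-(t^s-1)j_0$ for all $i\in\mathbb Z/(p)$, $s\in\mathbb Z$, with $j_i\ne j_k$ for some $i\ne k$. Then the multiplicative order of $t$ in $(\mathbb Z/(p))^\times$ is odd. *)

theory Defs
  imports Main "Berlekamp_Zassenhaus.Finite_Field"
begin

definition mult_order :: "'a::monoid_mult \<Rightarrow> nat" where
  "mult_order x = (LEAST n. n > 0 \<and> x ^ n = 1)"

end

theory Submission
  imports Defs
begin

text \<open>If the order of \<open>t\<close> were even, \<open>t\<close> would have a power equal to \<open>-1\<close>, the unique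
  element of order two. The functional equation at that power says that \<open>j i - j 0\<close> is odd
  in \<open>i\<close>, while \<open>j\<close> is even; since \<open>-1 \<noteq> 1\<close> the characteristic is not two, so \<open>j\<close> is
  constant.\<close>

lemma mult_order_pos:
  assumes "\<exists>n>0. x ^ n = 1"
  shows "0 < mult_order x"
  using LeastI_ex[OF assms] unfolding mult_order_def by blast

lemma power_mult_order:
  assumes "\<exists>n>0. x ^ n = 1"
  shows "x ^ mult_order x = 1"
  using LeastI_ex[OF assms] unfolding mult_order_def by blast

lemma power_ne_one_below_mult_order:
  assumes "0 < k" "k < mult_order x"
  shows "x ^ k \<noteq> 1"
  using assms not_less_Least unfolding mult_order_def by blast

lemma finite_idom_ex_power_eq_one:
  fixes x :: "'a::{finite,idom}"
  assumes "x \<noteq> 0"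
  shows "\<exists>n>0. x ^ n = 1"
proof -
  have "\<not> inj (\<lambda>n::nat. x ^ n)"
    using finite_imageD[of "\<lambda>n::nat. x ^ n" UNIV] by auto
  then obtain a b :: nat where "a < b" "x ^ a = x ^ b"
    by (metis inj_def linorder_neqE_nat)
  moreover have "x ^ a * x ^ (b - a) = x ^ b"
    using \<open>a < b\<close> by (simp flip: power_add)
  ultimately have "x ^ a * x ^ (b - a) = x ^ a * 1"
    by simp
  with assms \<open>a < b\<close> show ?thesis
    by (intro exI[of _ "b - a"]) simp
qed

lemma power_half_mult_order_ne_one:
  assumes "\<exists>n>0. x ^ n = 1" and "even (mult_order x)"
  shows "x ^ (mult_order x div 2) \<noteq> 1"
  using mult_order_pos[OF assms(1)] assms(2)
  by (intro power_ne_one_below_mult_order) (auto elim: evenE)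

lemma power_half_mult_order:
  fixes x :: "'a::idom"
  assumes "\<exists>n>0. x ^ n = 1" and "even (mult_order x)"
  shows "x ^ (mult_order x div 2) = -1"
proof -
  define y where "y = x ^ (mult_order x div 2)"
  have "mult_order x div 2 + mult_order x div 2 = mult_order x"
    using assms(2) by auto
  then have "y * y = 1"
    using power_mult_order[OF assms(1)] by (simp add: y_def flip: power_add)
  then have "(y - 1) * (y + 1) = 0"
    by (simp add: algebra_simps)
  moreover have "y \<noteq> 1"
    unfolding y_def using assms by (rule power_half_mult_order_ne_one)
  ultimately show ?thesis
    by (simp add: y_def eq_neg_iff_add_eq_0)
qed

lemma eq_at_zero_if_even_and_shifted_odd:
  fixes j :: "'a::idom \<Rightarrow> 'a"
  assumes "(-1::'a) \<noteq> 1"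
    and "\<And>i. j (- i) = j i"
    and "\<And>i. j (- i) = 2 * j 0 - j i"
  shows "j i = j 0"
proof -
  have "j i = 2 * j 0 - j i"
    using assms(2,3)[of i] by metis
  then have "2 * j i = 2 * j 0"
    by (metis mult_2 eq_diff_eq)
  moreover have "(2::'a) \<noteq> 0"
    using assms(1) by (metis one_add_one neg_eq_iff_add_eq_0)
  ultimately show ?thesis
    by simp
qed

theorem mainTheorem11:
  fixes t :: "'p::prime_card mod_ring"
    and j :: "'p mod_ring \<Rightarrow> 'p mod_ring"
  assumes "t \<noteq> 0"
    and "\<And>i. j i = j (- i)"
    and "\<And>i (s::int). j (t powi s * i) = t powi s * j i - (t powi s - 1) * j 0"
    and "\<exists>i k. i \<noteq> k \<and> j i \<noteq> j k"
  shows "odd (mult_order t)"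
proof
  assume even: "even (mult_order t)"
  define m where "m = mult_order t div 2"
  have finite_order: "\<exists>n>0. t ^ n = 1"
    using finite_idom_ex_power_eq_one[OF assms(1)] .
  have minus_one: "t ^ m = -1"
    using power_half_mult_order[OF finite_order even] by (simp add: m_def)
  have "t ^ m \<noteq> 1"
    unfolding m_def using finite_order even by (rule power_half_mult_order_ne_one)
  moreover have "j (- i) = 2 * j 0 - j i" for i
    using assms(3)[of "int m" i] minus_one by (simp add: algebra_simps)
  ultimately have "j i = j 0" for i
    using assms(2) minus_one by (metis eq_at_zero_if_even_and_shifted_odd)
  with assms(4) show False
    by metis
qed

end
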